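(* Let $c\ge1$, $\lambda_1,\lambda_2,\mu_1,\mu_2>0$, let $X$ be the Markov chain described in the context with $X(0)=(0,0)$, fix $\alpha$ with $\mathrm{Re}\,\alpha>0$, and let $\{v_{i,j}\}_{i\ge j\ge0}$ be defined recursively by $v_{0,0}=\pi_{(0,c-1)}(\alpha)$ and, for $i\ge0$, $v_{i+1,0}=\pi_{(i+1,c-1)}(\alpha)$, $v_{i+1,j}=R_1\bigl(v_{i,j-1}+R_2\sum_{k=j}^{i}v_{i,k}\bigr)$ for $1\le j\le i+1$. Then for all $i\ge j\ge0$, $$v_{i,j}=R_1^{\,j}\pi_{(i-j,c-1)}(\alpha)+\sum_{k=j+1}^{i}R_1^{\,k}\pi_{(i-k,c-1)}(\alpha)\sum_{l=1}^{k-j}\frac{j}{k-j}\binom{k-j}{l}\binom{k-1}{l-1}R_2^{\,l}.$$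
   Context: The Markov chain $X=\{(X_1(t),X_2(t))\}_{t\ge0}$ on $\mathbb{N}_0^2$ has as its only nonzero off-diagonal transition rates: $q((i,j),(i+1,j))=\lambda_1$ ($i,j\ge0$); $q((i,j),(i,j+1))=\lambda_2$ ($i,j\ge0$); $q((i,j),(i-1,j))=\max(\min(i,c-j),0)\mu_1$ ($i\ge1$, $j\ge0$); $q((i,j),(i,j-1))=\min(c,j)\mu_2$ ($i\ge0$, $j\ge1$). For $x\in\mathbb{N}_0^2$, $p_x(t)=P(X(t)=x\mid X(0)=(0,0))$ and $\pi_x(\alpha)=\int_0^\infty e^{-\alpha t}p_x(t)\,dt$. For $\lambda,\mu>0$, $\phi_{\lambda,\mu}(s)=\frac{\lambda+\mu+s-\sqrt{(\lambda+\mu+s)^2-4\lambda\mu}}{2\lambda}$ is the Laplace–Stieltjes transform of the busy period of an $M/M/1$ queue (arrival rate $\lambda$, service rate $\mu$) started by one customer. Set $\rho_2=\lambda_2/(c\mu_2)$, $\phi_2=\phi_{\lambda_2,c\mu_2}(\lambda_1+\alpha)$, $r_2=\rho_2\phi_2$, $\Omega_2=\frac{\rho_2\phi_2}{\lambda_2(1-\rho_2\phi_2^2)}$, $R_1=\frac{\lambda_1\Omega_2}{1-r_2\phi_2}$, $R_2=r_2\phi_2$. Empty sums are zero. *)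

theory Defs
  imports "HOL-Analysis.Analysis"
begin

type_synonym state = "nat \<times> nat"

definition rate :: "nat \<Rightarrow> real \<Rightarrow> real \<Rightarrow> real \<Rightarrow> real \<Rightarrow> state \<Rightarrow> state \<Rightarrow> real" where
  "rate c l1 l2 m1 m2 x y =
     (let i = fst x; j = snd x; i' = fst y; j' = snd y in
      if i' = i + 1 \<and> j' = j then l1
      else if i' = i \<and> j' = j + 1 then l2
      else if 1 \<le> i \<and> i' = i - 1 \<and> j' = j
        then max (min (real i) (real c - real j)) 0 * m1
      else if 1 \<le> j \<and> i' = i \<and> j' = j - 1 then real (min c j) * m2
      else 0)"

text \<open>Uniformization constant: an upper bound for all total outflow rates.\<close>
definition unif_const :: "nat \<Rightarrow> real \<Rightarrow> real \<Rightarrow> real \<Rightarrow> real \<Rightarrow> real" where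
  "unif_const c l1 l2 m1 m2 = l1 + l2 + real c * m1 + real c * m2"

definition out_rate :: "nat \<Rightarrow> real \<Rightarrow> real \<Rightarrow> real \<Rightarrow> real \<Rightarrow> state \<Rightarrow> real" where
  "out_rate c l1 l2 m1 m2 x = (\<Sum>\<^sub>\<infinity> y \<in> UNIV - {x}. rate c l1 l2 m1 m2 x y)"

definition jump :: "nat \<Rightarrow> real \<Rightarrow> real \<Rightarrow> real \<Rightarrow> real \<Rightarrow> state \<Rightarrow> state \<Rightarrow> real" where
  "jump c l1 l2 m1 m2 x y =
     (if y = x then 1 - out_rate c l1 l2 m1 m2 x / unif_const c l1 l2 m1 m2
      else rate c l1 l2 m1 m2 x y / unif_const c l1 l2 m1 m2)"

fun jump_pow :: "nat \<Rightarrow> real \<Rightarrow> real \<Rightarrow> real \<Rightarrow> real \<Rightarrow> nat \<Rightarrow> state \<Rightarrow> state \<Rightarrow> real" where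
  "jump_pow c l1 l2 m1 m2 0 x y = (if x = y then 1 else 0)"
| "jump_pow c l1 l2 m1 m2 (Suc n) x y =
     (\<Sum>\<^sub>\<infinity> z. jump c l1 l2 m1 m2 x z * jump_pow c l1 l2 m1 m2 n z y)"

text \<open>Transition probability p_x(t) = P(X(t) = x | X(0) = (0,0)), via uniformization
  (rates are bounded, so the chain is non-explosive and this is its transition function).\<close>
definition trans_prob :: "nat \<Rightarrow> real \<Rightarrow> real \<Rightarrow> real \<Rightarrow> real \<Rightarrow> state \<Rightarrow> real \<Rightarrow> real" where
  "trans_prob c l1 l2 m1 m2 x t =
     (let L = unif_const c l1 l2 m1 m2 in
      (\<Sum>n. exp (- L * t) * (L * t) ^ n / fact n * jump_pow c l1 l2 m1 m2 n (0, 0) x))"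

definition lt_pi :: "nat \<Rightarrow> real \<Rightarrow> real \<Rightarrow> real \<Rightarrow> real \<Rightarrow> state \<Rightarrow> complex \<Rightarrow> complex" where
  "lt_pi c l1 l2 m1 m2 x \<alpha> =
     integral {0..} (\<lambda>t::real. exp (- \<alpha> * complex_of_real t) * complex_of_real (trans_prob c l1 l2 m1 m2 x t))"

text \<open>Busy-period LST of the M/M/1 queue (principal square root).\<close>
definition phi :: "real \<Rightarrow> real \<Rightarrow> complex \<Rightarrow> complex" where
  "phi l m s = (of_real l + of_real m + s - csqrt ((of_real l + of_real m + s)\<^sup>2 - 4 * of_real l * of_real m))
                / (2 * of_real l)"

definition rho2 :: "nat \<Rightarrow> real \<Rightarrow> real \<Rightarrow> real" where
  "rho2 c l2 m2 = l2 / (real c * m2)"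

definition phi2 :: "nat \<Rightarrow> real \<Rightarrow> real \<Rightarrow> real \<Rightarrow> complex \<Rightarrow> complex" where
  "phi2 c l1 l2 m2 \<alpha> = phi l2 (real c * m2) (of_real l1 + \<alpha>)"

definition r2 :: "nat \<Rightarrow> real \<Rightarrow> real \<Rightarrow> real \<Rightarrow> complex \<Rightarrow> complex" where
  "r2 c l1 l2 m2 \<alpha> = of_real (rho2 c l2 m2) * phi2 c l1 l2 m2 \<alpha>"

definition Omega2 :: "nat \<Rightarrow> real \<Rightarrow> real \<Rightarrow> real \<Rightarrow> complex \<Rightarrow> complex" where
  "Omega2 c l1 l2 m2 \<alpha> = of_real (rho2 c l2 m2) * phi2 c l1 l2 m2 \<alpha> /
      (of_real l2 * (1 - of_real (rho2 c l2 m2) * (phi2 c l1 l2 m2 \<alpha>)\<^sup>2))"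

definition R1 :: "nat \<Rightarrow> real \<Rightarrow> real \<Rightarrow> real \<Rightarrow> complex \<Rightarrow> complex" where
  "R1 c l1 l2 m2 \<alpha> = of_real l1 * Omega2 c l1 l2 m2 \<alpha> / (1 - r2 c l1 l2 m2 \<alpha> * phi2 c l1 l2 m2 \<alpha>)"

definition R2 :: "nat \<Rightarrow> real \<Rightarrow> real \<Rightarrow> real \<Rightarrow> complex \<Rightarrow> complex" where
  "R2 c l1 l2 m2 \<alpha> = r2 c l1 l2 m2 \<alpha> * phi2 c l1 l2 m2 \<alpha>"

end

theory Submission imports Defs begin

text \<open>
  Only the recursion matters; the values \<open>p n = \<pi>_(n, c-1)(\<alpha>)\<close> enter as an arbitrary sequence.
  By induction on \<open>i\<close>, \<open>v i j = (\<Sum>k = j..i. R1^k * p (i - k) * P k j)\<close>, where the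
  polynomials \<open>P k j\<close> in \<open>R2\<close> are determined by \<open>P k k = 1\<close> and
  \<open>P k j = P (k-1) (j-1) + R2 * (\<Sum>m = j..k-1. P (k-1) m)\<close>.
  Taking the difference of this recursion at \<open>j\<close> and \<open>j + 1\<close> turns it into a three-term
  identity between the coefficients \<open>j/(k-j) * C(k-j, l) * C(k-1, l-1)\<close> of \<open>P k j\<close>
  (generalised Narayana numbers), which follows from the absorption identities for binomial
  coefficients.
\<close>

definition gen_narayana :: "nat \<Rightarrow> nat \<Rightarrow> nat \<Rightarrow> 'a :: field_char_0" where
  "gen_narayana k j l =
     (if j < k then
        (if l = 0 then 0
         else of_nat j / of_nat (k - j) * of_nat ((k - j) choose l) * of_nat ((k - 1) choose (l - 1)))
      else if j = k \<and> l = 0 then 1 else 0)"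

definition gen_narayana_poly :: "'a \<Rightarrow> nat \<Rightarrow> nat \<Rightarrow> 'a :: field_char_0" where
  "gen_narayana_poly b k j = (\<Sum>l\<le>k. gen_narayana k j l * b ^ l)"

lemma of_nat_binomial_absorb_comp:
  "of_nat n * of_nat ((n - 1) choose k) = (of_nat n - of_nat k) * (of_nat (n choose k) :: 'a :: comm_ring_1)"
proof (cases "k \<le> n")
  case True
  then show ?thesis
    using arg_cong[OF binomial_absorb_comp[of n k], of "of_nat :: nat \<Rightarrow> 'a"] by (simp add: of_nat_diff)
qed (simp add: binomial_eq_0)

lemma of_nat_times_binomial_minus1_eq:
  "0 < k \<Longrightarrow> of_nat n * of_nat ((n - 1) choose (k - 1)) = of_nat k * (of_nat (n choose k) :: 'a :: comm_semiring_1)"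
  by (metis of_nat_mult times_binomial_minus1_eq)

text \<open>The generic case \<open>k = j + m + 1\<close>, \<open>l = p + 1\<close> of \<open>gen_narayana_diff\<close> below.\<close>

lemma narayana_binomial_identity:
  fixes j m p :: nat
  assumes "1 \<le> j" "1 \<le> m" "1 \<le> p"
  defines "X \<equiv> of_nat (m choose p) :: 'a :: field_char_0" and "Y \<equiv> of_nat ((m - 1) choose p) :: 'a"
    and "Z \<equiv> of_nat ((j + m) choose p) :: 'a" and "W \<equiv> of_nat ((j + m - 1) choose p) :: 'a"
    and "A \<equiv> of_nat ((m - 1) choose (p - 1)) :: 'a" and "B \<equiv> of_nat ((j + m - 1) choose (p - 1)) :: 'a"
  shows "of_nat j * X * Z / of_nat (p + 1) - of_nat (j + 1) * Y * Z / of_nat (p + 1)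
       = of_nat (j - 1) * X * W / of_nat (p + 1) - of_nat j * Y * W / of_nat (p + 1)
         + of_nat j * A * B / of_nat p"
proof -
  define J M P :: 'a where "J = of_nat j" and "M = of_nat m" and "P = of_nat p"
  have "M * A = P * X" "(J + M) * B = P * Z"
    unfolding J_def M_def P_def A_def B_def X_def Z_def of_nat_add[symmetric]
    by (rule of_nat_times_binomial_minus1_eq, use assms(3) in simp)+
  moreover have "M * Y = (M - P) * X" "(J + M) * W = (J + M - P) * Z"
    unfolding J_def M_def P_def Y_def W_def X_def Z_def of_nat_add[symmetric]
    by (rule of_nat_binomial_absorb_comp)+
  moreover have "M \<noteq> 0" "J + M \<noteq> 0" "P \<noteq> 0"
    using assms by (simp_all add: J_def M_def P_def of_nat_add[symmetric] del: of_nat_add)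
  moreover have "P + 1 \<noteq> 0"
    using of_nat_neq_0[of p] by (simp add: P_def add.commute)
  ultimately have "P * (J * X * Z - (J + 1) * Y * Z - ((J - 1) * X * W - J * Y * W)) = (P + 1) * (J * A * B)"
    by algebra
  then have "(J * X * Z - (J + 1) * Y * Z - ((J - 1) * X * W - J * Y * W)) / (P + 1) = J * A * B / P"
    using \<open>P \<noteq> 0\<close> \<open>P + 1 \<noteq> 0\<close> by (simp add: frac_eq_eq algebra_simps)
  then show ?thesis
    using assms(1) by (simp add: J_def P_def of_nat_diff add_divide_distrib diff_divide_distrib algebra_simps)
qed

lemma gen_narayana_eq:
  assumes "j < k" "0 < l"
  shows "gen_narayana k j l
           = of_nat j * of_nat ((k - j - 1) choose (l - 1)) * of_nat ((k - 1) choose (l - 1)) / of_nat l"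
proof -
  have "of_nat ((k - j) choose l) = of_nat (k - j) * of_nat ((k - j - 1) choose (l - 1)) / (of_nat l :: 'a)"
    using of_nat_times_binomial_minus1_eq[of l "k - j", where 'a = 'a] assms(2) by (simp add: field_simps)
  then show ?thesis
    using assms unfolding gen_narayana_def by simp
qed

lemma gen_narayana_eq_0: "k < l \<Longrightarrow> gen_narayana k j l = 0"
  by (simp add: gen_narayana_def binomial_eq_0)

lemma gen_narayana_diff:
  assumes "1 \<le> j" "j < k"
  shows "gen_narayana k j l - gen_narayana k (j + 1) l
       = gen_narayana (k - 1) (j - 1) l - gen_narayana (k - 1) j l
         + (if l = 0 then 0 else gen_narayana (k - 1) j (l - 1))"
proof -
  obtain m where k: "k = j + m + 1"
    using assms(2) by (metis less_iff_Suc_add Suc_eq_plus1)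
  consider "l = 0" | "l = 1" | "m = 0" "2 \<le> l" | "1 \<le> m" "2 \<le> l"
    by linarith
  then show ?thesis
  proof cases
    case 4
    define p where "p = l - 1"
    have l: "l = p + 1" and "1 \<le> p"
      using \<open>2 \<le> l\<close> by (simp_all add: p_def)
    with assms \<open>1 \<le> m\<close> show ?thesis
      using narayana_binomial_identity[OF assms(1) \<open>1 \<le> m\<close> \<open>1 \<le> p\<close>, where 'a = 'a]
      by (simp add: k l gen_narayana_eq)
  qed (use assms of_nat_neq_0[of m, unfolded of_nat_Suc] in \<open>auto simp: k gen_narayana_def\<close>)
qed

lemma gen_narayana_poly_eq_sum:
  "k \<le> n \<Longrightarrow> gen_narayana_poly b k j = (\<Sum>l\<le>n. gen_narayana k j l * b ^ l)"
  unfolding gen_narayana_poly_def by (rule sum.mono_neutral_left) (auto simp: gen_narayana_eq_0)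

lemma gen_narayana_poly_diag [simp]: "gen_narayana_poly b k k = 1"
  by (simp add: gen_narayana_poly_def gen_narayana_def sum.atMost_shift)

lemma gen_narayana_poly_0: "0 < k \<Longrightarrow> gen_narayana_poly b k 0 = 0"
  by (auto simp: gen_narayana_poly_def gen_narayana_def intro!: sum.neutral)

lemma gen_narayana_poly_diff:
  assumes "1 \<le> j" "j < k"
  shows "gen_narayana_poly b k j - gen_narayana_poly b k (j + 1)
       = gen_narayana_poly b (k - 1) (j - 1) - gen_narayana_poly b (k - 1) j + b * gen_narayana_poly b (k - 1) j"
proof -
  obtain n where k: "k = Suc n"
    using assms(2) by (cases k) auto
  have diff: "gen_narayana (Suc n) j l - gen_narayana (Suc n) (j + 1) l
      = gen_narayana n (j - 1) l - gen_narayana n j l + (if l = 0 then 0 else gen_narayana n j (l - 1))" for l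
    using gen_narayana_diff[OF assms, of l] by (simp add: k cong: if_cong)
  have shift: "(\<Sum>l\<le>Suc n. (if l = 0 then 0 else gen_narayana n j (l - 1)) * b ^ l)
      = b * gen_narayana_poly b n j"
    unfolding gen_narayana_poly_def sum.atMost_Suc_shift by (simp add: sum_distrib_left algebra_simps)
  have "gen_narayana_poly b (Suc n) j - gen_narayana_poly b (Suc n) (j + 1)
      = (\<Sum>l\<le>Suc n. (gen_narayana (Suc n) j l - gen_narayana (Suc n) (j + 1) l) * b ^ l)"
    unfolding gen_narayana_poly_def by (simp add: sum_subtractf algebra_simps)
  also have "\<dots> = (\<Sum>l\<le>Suc n. gen_narayana n (j - 1) l * b ^ l) - (\<Sum>l\<le>Suc n. gen_narayana n j l * b ^ l)
      + (\<Sum>l\<le>Suc n. (if l = 0 then 0 else gen_narayana n j (l - 1)) * b ^ l)"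
    unfolding diff by (simp add: sum_subtractf sum.distrib algebra_simps)
  also have "\<dots> = gen_narayana_poly b n (j - 1) - gen_narayana_poly b n j + b * gen_narayana_poly b n j"
    by (simp only: shift gen_narayana_poly_eq_sum[OF le_SucI[OF order.refl], symmetric])
  finally show ?thesis
    by (simp add: k)
qed

lemma gen_narayana_poly_rec:
  assumes "1 \<le> j" "j \<le> k"
  shows "gen_narayana_poly b k j
       = gen_narayana_poly b (k - 1) (j - 1) + b * (\<Sum>m = j..k - 1. gen_narayana_poly b (k - 1) m)"
  using assms
proof (induction "k - j" arbitrary: j)
  case 0
  then show ?case by simp
next
  case (Suc d)
  then have "j < k" by simp
  have IH: "gen_narayana_poly b k (j + 1)
      = gen_narayana_poly b (k - 1) j + b * (\<Sum>m = j + 1..k - 1. gen_narayana_poly b (k - 1) m)"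
    using Suc.hyps(1)[of "j + 1"] Suc.hyps(2) \<open>j < k\<close> by simp
  have split: "(\<Sum>m = j..k - 1. gen_narayana_poly b (k - 1) m)
      = gen_narayana_poly b (k - 1) j + (\<Sum>m = j + 1..k - 1. gen_narayana_poly b (k - 1) m)"
    using \<open>j < k\<close> by (subst sum.atLeast_Suc_atMost) auto
  show ?case
    using gen_narayana_poly_diff[OF Suc.prems(1) \<open>j < k\<close>, of b] unfolding IH split
    by (simp add: algebra_simps)
qed

lemma gen_narayana_poly_eq:
  assumes "j < k"
  shows "gen_narayana_poly b k j = (\<Sum>l = 1..k - j. of_nat j / of_nat (k - j) * of_nat ((k - j) choose l)
                                      * of_nat ((k - 1) choose (l - 1)) * b ^ l)"
proof -
  have "gen_narayana_poly b k j = (\<Sum>l = 1..k - j. gen_narayana k j l * b ^ l)"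
    unfolding gen_narayana_poly_def
    by (rule sum.mono_neutral_right) (use assms in \<open>auto simp: gen_narayana_def binomial_eq_0\<close>)
  then show ?thesis
    using assms by (simp add: gen_narayana_def)
qed

lemma sum_triangle_swap:
  fixes i j :: nat
  shows "(\<Sum>k = j..i. \<Sum>m = j..k. g k m) = (\<Sum>m = j..i. \<Sum>k = m..i. g k m)"
proof -
  have "(\<Sum>k = j..i. \<Sum>m = j..k. g k m) = (\<Sum>k \<in> {j..i}. \<Sum>m \<in> {m \<in> {j..i}. m \<le> k}. g k m)"
    by (intro sum.cong) auto
  also have "\<dots> = (\<Sum>m \<in> {j..i}. \<Sum>k \<in> {k \<in> {j..i}. m \<le> k}. g k m)"
    by (rule sum.swap_restrict) auto
  also have "\<dots> = (\<Sum>m = j..i. \<Sum>k = m..i. g k m)"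
    by (intro sum.cong) auto
  finally show ?thesis .
qed

lemma triangular_recursion_solution:
  fixes a b :: "'a :: field_char_0" and p :: "nat \<Rightarrow> 'a" and v :: "nat \<Rightarrow> nat \<Rightarrow> 'a"
  assumes v_00: "v 0 0 = p 0" and v_0: "\<And>i. v (Suc i) 0 = p (Suc i)"
    and v_rec: "\<And>i j. 1 \<le> j \<Longrightarrow> j \<le> i + 1 \<Longrightarrow> v (Suc i) j = a * (v i (j - 1) + b * (\<Sum>k = j..i. v i k))"
  shows "j \<le> i \<Longrightarrow> v i j = (\<Sum>k = j..i. a ^ k * p (i - k) * gen_narayana_poly b k j)"
proof (induction i arbitrary: j)
  case 0
  then show ?case by (simp add: v_00)
next
  case (Suc i)
  show ?case
  proof (cases j)
    case 0
    have "(\<Sum>k = 0..Suc i. a ^ k * p (Suc i - k) * gen_narayana_poly b k 0) = p (Suc i)"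
      by (simp add: sum.atLeast_Suc_atMost gen_narayana_poly_0)
    then show ?thesis
      by (simp add: 0 v_0)
  next
    case (Suc j')
    have "j' \<le> i"
      using Suc.prems Suc by simp
    have first: "a * v i j' = (\<Sum>k = j..Suc i. a ^ k * p (Suc i - k) * gen_narayana_poly b (k - 1) (j - 1))"
      unfolding Suc.IH[OF \<open>j' \<le> i\<close>] Suc sum_distrib_left
      by (subst sum.shift_bounds_cl_Suc_ivl) (simp add: algebra_simps)
    have "a * (b * (\<Sum>m = j..i. v i m)) = (\<Sum>m = j..i. \<Sum>k = m..i. a * (b * (a ^ k * p (i - k) * gen_narayana_poly b k m)))"
      using Suc.IH by (simp add: sum_distrib_left)
    also have "\<dots> = (\<Sum>k = j..i. \<Sum>m = j..k. a * (b * (a ^ k * p (i - k) * gen_narayana_poly b k m)))"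
      by (rule sum_triangle_swap[symmetric])
    also have "\<dots> = (\<Sum>k = j'..i. \<Sum>m = j..k. a * (b * (a ^ k * p (i - k) * gen_narayana_poly b k m)))"
      using \<open>j' \<le> i\<close> by (subst (2) sum.atLeast_Suc_atMost) (auto simp: Suc)
    also have "\<dots> = (\<Sum>k = j..Suc i. a ^ k * p (Suc i - k) * (b * (\<Sum>m = j..k - 1. gen_narayana_poly b (k - 1) m)))"
      unfolding Suc by (subst sum.shift_bounds_cl_Suc_ivl) (simp add: sum_distrib_left algebra_simps)
    finally have second: "a * (b * (\<Sum>m = j..i. v i m)) = \<dots>" .
    have "v (Suc i) j = (\<Sum>k = j..Suc i. a ^ k * p (Suc i - k)
        * (gen_narayana_poly b (k - 1) (j - 1) + b * (\<Sum>m = j..k - 1. gen_narayana_poly b (k - 1) m)))"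
      using v_rec[of j i] Suc.prems unfolding Suc
      by (simp add: first[unfolded Suc] second[unfolded Suc] distrib_left sum.distrib algebra_simps)
    also have "\<dots> = (\<Sum>k = j..Suc i. a ^ k * p (Suc i - k) * gen_narayana_poly b k j)"
      using Suc by (intro sum.cong) (simp_all add: gen_narayana_poly_rec)
    finally show ?thesis .
  qed
qed

theorem theorem3:
  fixes c :: nat and l1 l2 m1 m2 :: real and \<alpha> :: complex and v :: "nat \<Rightarrow> nat \<Rightarrow> complex"
  assumes "c \<ge> 1" and "l1 > 0" and "l2 > 0" and "m1 > 0" and "m2 > 0"
    and "Re \<alpha> > 0"
    and "v 0 0 = lt_pi c l1 l2 m1 m2 (0, c - 1) \<alpha>"
    and "\<forall>i. v (Suc i) 0 = lt_pi c l1 l2 m1 m2 (Suc i, c - 1) \<alpha>"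
    and "\<forall>i j. 1 \<le> j \<and> j \<le> i + 1 \<longrightarrow>
           v (Suc i) j = R1 c l1 l2 m2 \<alpha> * (v i (j - 1) + R2 c l1 l2 m2 \<alpha> * (\<Sum>k = j..i. v i k))"
  shows "\<forall>i j. j \<le> i \<longrightarrow>
     v i j = R1 c l1 l2 m2 \<alpha> ^ j * lt_pi c l1 l2 m1 m2 (i - j, c - 1) \<alpha>
       + (\<Sum>k = j + 1..i. R1 c l1 l2 m2 \<alpha> ^ k * lt_pi c l1 l2 m1 m2 (i - k, c - 1) \<alpha> *
            (\<Sum>l = 1..k - j. of_nat j / of_nat (k - j) * of_nat ((k - j) choose l)
                              * of_nat ((k - 1) choose (l - 1)) * R2 c l1 l2 m2 \<alpha> ^ l))"
proof (intro allI impI)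
  fix i j :: nat
  assume "j \<le> i"
  let ?p = "\<lambda>n. lt_pi c l1 l2 m1 m2 (n, c - 1) \<alpha>"
  have "v i j = (\<Sum>k = j..i. R1 c l1 l2 m2 \<alpha> ^ k * ?p (i - k) * gen_narayana_poly (R2 c l1 l2 m2 \<alpha>) k j)"
    using assms(7-9) \<open>j \<le> i\<close> by (intro triangular_recursion_solution) auto
  also have "\<dots> = R1 c l1 l2 m2 \<alpha> ^ j * ?p (i - j)
      + (\<Sum>k = j + 1..i. R1 c l1 l2 m2 \<alpha> ^ k * ?p (i - k) * gen_narayana_poly (R2 c l1 l2 m2 \<alpha>) k j)"
    using \<open>j \<le> i\<close> by (simp add: sum.atLeast_Suc_atMost)
  finally show "v i j = R1 c l1 l2 m2 \<alpha> ^ j * ?p (i - j)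
       + (\<Sum>k = j + 1..i. R1 c l1 l2 m2 \<alpha> ^ k * ?p (i - k) *
            (\<Sum>l = 1..k - j. of_nat j / of_nat (k - j) * of_nat ((k - j) choose l)
                              * of_nat ((k - 1) choose (l - 1)) * R2 c l1 l2 m2 \<alpha> ^ l))"
    by (simp add: gen_narayana_poly_eq)
qed

end
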